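(* Let $n\ge1$ and let $A_1,\dots,A_n\subset\omega$ be co-infinite. Consider the equivalence relation on $\mathrm{Inj}(n\times\omega,\omega)$ generated by $\phi\sim\phi\circ(f_1\amalg\dots\amalg f_n)$ for all $\phi\in\mathrm{Inj}(n\times\omega,\omega)$ and $f_i\in\mathcal M_{A_i}$ ($i=1,\dots,n$). Then two elements of $\mathrm{Inj}(n\times\omega,\omega)$ are equivalent if and only if they agree on $\{i\}\times A_i\subset n\times\omega$ for all $i=1,\dots,n$.
   Context: $\omega=\{1,2,\dots\}$, $n=\{1,\dots,n\}$, $\mathcal M$ the monoid of injections $\omega\to\omega$, $\mathcal M_A$ the submonoid of injections fixing $A$ elementwise. $\mathrm{Inj}(n\times\omega,\omega)$ is the set of injections $n\times\omega\to\omega$, and $f_1\amalg\dots\amalg f_n$ is the self-map of $n\times\omega$ sending $(i,t)$ to $(i,f_i(t))$. A subset of $\omega$ is co-infinite if its complement is infinite. *)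

theory Defs
  imports Main
begin

text \<open>omega is modelled by nat (a relabelling of {1,2,...}); the index set n = {1..n}
  is modelled by a finite type 'n (so n = CARD('n) \<ge> 1).\<close>

definition Inj_prod :: "('n \<times> nat \<Rightarrow> nat) set" where
  "Inj_prod = {\<phi>. inj \<phi>}"

definition M_fix :: "nat set \<Rightarrow> (nat \<Rightarrow> nat) set" where
  "M_fix A = {f. inj f \<and> (\<forall>a\<in>A. f a = a)}"

definition coprod :: "('n \<Rightarrow> nat \<Rightarrow> nat) \<Rightarrow> ('n \<times> nat \<Rightarrow> 'n \<times> nat)" where
  "coprod f = (\<lambda>(i, t). (i, f i t))"

definition gen_rel :: "('n \<Rightarrow> nat set) \<Rightarrow> (('n \<times> nat \<Rightarrow> nat) \<times> ('n \<times> nat \<Rightarrow> nat)) set" where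
  "gen_rel A = {(\<phi>, \<phi> \<circ> coprod f) | \<phi> f. \<phi> \<in> Inj_prod \<and> (\<forall>i. f i \<in> M_fix (A i))}"

definition gen_equiv :: "('n \<Rightarrow> nat set) \<Rightarrow> (('n \<times> nat \<Rightarrow> nat) \<times> ('n \<times> nat \<Rightarrow> nat)) set" where
  "gen_equiv A = (gen_rel A \<union> (gen_rel A)\<inverse>)\<^sup>*"

end

theory Submission
  imports Defs "HOL-Library.Infinite_Set" "HOL-Library.Countable" "HOL-Library.Disjoint_Sets"
begin

(* Each generating move changes \<phi> only through injections fixing the A_i, so agreement on
  the sets {i} \<times> A_i is invariant. Conversely, if for every i the images of the free parts
  {i} \<times> (\<omega> - A_i) under \<phi> and \<psi> share infinitely many values, one can choose f_i, g_i
  in M_{A_i} with \<phi> \<circ> (f_1 \<amalg> ... \<amalg> f_n) = \<psi> \<circ> (g_1 \<amalg> ... \<amalg> g_n), so \<phi> ~ \<psi>.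
  In general one interposes an injection \<rho> that agrees with \<phi> on the A_i and maps the
  i-th free part onto E_i \<union> F_i, where the E_i and F_i are pairwise disjoint infinite subsets
  of the free images of \<phi> and \<psi>; then \<phi> ~ \<rho> ~ \<psi>. *)

lemma gen_equiv_sym: "(\<phi>, \<psi>) \<in> gen_equiv A \<Longrightarrow> (\<psi>, \<phi>) \<in> gen_equiv A"
  unfolding gen_equiv_def by (metis converse_Un converse_converse rtrancl_converseI sup_commute)

lemma gen_equiv_trans:
  "(\<phi>, \<chi>) \<in> gen_equiv A \<Longrightarrow> (\<chi>, \<psi>) \<in> gen_equiv A \<Longrightarrow> (\<phi>, \<psi>) \<in> gen_equiv A"
  unfolding gen_equiv_def by (rule rtrancl_trans)

lemma gen_equiv_coprod:
  "inj \<phi> \<Longrightarrow> (\<And>i. f i \<in> M_fix (A i)) \<Longrightarrow> (\<phi>, \<phi> \<circ> coprod f) \<in> gen_equiv A"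
  unfolding gen_equiv_def gen_rel_def Inj_prod_def by blast

lemma gen_equiv_if_coprod_eq:
  assumes "inj \<phi>" "inj \<psi>" "\<And>i. f i \<in> M_fix (A i)" "\<And>i. g i \<in> M_fix (A i)"
    and "\<phi> \<circ> coprod f = \<psi> \<circ> coprod g"
  shows "(\<phi>, \<psi>) \<in> gen_equiv A"
  using gen_equiv_coprod[of \<phi> f A] gen_equiv_coprod[of \<psi> g A] assms
  by (metis gen_equiv_sym gen_equiv_trans)

lemma gen_equiv_imp_agree:
  assumes "(\<phi>, \<psi>) \<in> gen_equiv A" "a \<in> A i"
  shows "\<phi> (i, a) = \<psi> (i, a)"
  using assms(1) unfolding gen_equiv_def
proof (induction rule: rtrancl_induct)
  case (step \<chi> \<chi>')
  then show ?case using assms(2) by (auto simp: gen_rel_def M_fix_def coprod_def)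
qed simp

lemma ex_M_fix_into:
  assumes "infinite D" "D \<inter> A = {}"
  shows "\<exists>f\<in>M_fix A. f ` (- A) \<subseteq> D"
proof -
  define f where "f t = (if t \<in> A then t else enumerate D t)" for t
  have in_D: "enumerate D t \<in> D" for t using enumerate_in_set[OF assms(1)] .
  have "inj f"
  proof (rule injI)
    fix s t assume "f s = f t"
    then show "s = t"
      using in_D[of s] in_D[of t] assms(2) injD[OF inj_enumerate[OF assms(1)], of s t]
      by (auto simp: f_def split: if_splits)
  qed
  moreover have "f ` (- A) \<subseteq> D" using in_D by (auto simp: f_def)
  moreover have "\<forall>a\<in>A. f a = a" by (simp add: f_def)
  ultimately show ?thesis unfolding M_fix_def by blast
qed

lemma ex_M_fix_lift:
  assumes "inj_on u (- A)" "u ` (- A) \<subseteq> v ` (- A)"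
  shows "\<exists>g\<in>M_fix A. \<forall>t\<in>- A. v (g t) = u t"
proof -
  define g where "g t = (if t \<in> A then t else inv_into (- A) v (u t))" for t
  have lift: "g t \<in> - A \<and> v (g t) = u t" if "t \<notin> A" for t
  proof -
    have "u t \<in> v ` (- A)" using assms(2) that by blast
    then show ?thesis using that inv_into_into[of "u t" v "- A"] by (simp add: g_def f_inv_into_f)
  qed
  have "inj g"
  proof (rule injI)
    fix s t assume eq: "g s = g t"
    have "g x \<in> A \<longleftrightarrow> x \<in> A" for x using lift[of x] by (auto simp: g_def)
    then consider "s \<in> A" "t \<in> A" | "s \<notin> A" "t \<notin> A" using eq by metis
    then show "s = t"
    proof cases
      case 1
      then show ?thesis using eq by (simp add: g_def)
    next
      case 2
      then have "u s = u t" using eq lift by metis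
      then show ?thesis using 2 inj_onD[OF assms(1)] by blast
    qed
  qed
  moreover have "\<forall>a\<in>A. g a = a" by (simp add: g_def)
  ultimately show ?thesis using lift unfolding M_fix_def by blast
qed

lemma ex_M_fix_equalizer:
  assumes "inj u" "infinite (u ` (- A) \<inter> v ` (- A))"
  shows "\<exists>f\<in>M_fix A. \<exists>g\<in>M_fix A. \<forall>t\<in>- A. u (f t) = v (g t)"
proof -
  define D where "D = - A \<inter> u -` v ` (- A)"
  have "u ` D = u ` (- A) \<inter> v ` (- A)" by (auto simp: D_def)
  then have "infinite D" using assms(2) by (metis finite_imageI)
  moreover have "D \<inter> A = {}" by (auto simp: D_def)
  ultimately obtain f where f: "f \<in> M_fix A" "f ` (- A) \<subseteq> D"
    using ex_M_fix_into by blast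
  have "inj (u \<circ> f)" using f(1) assms(1) by (simp add: M_fix_def inj_compose)
  then have "inj_on (u \<circ> f) (- A)" by (rule inj_on_subset) simp
  moreover have "(u \<circ> f) ` (- A) \<subseteq> v ` (- A)" using f(2) unfolding D_def by auto
  ultimately have "\<exists>g\<in>M_fix A. \<forall>t\<in>- A. v (g t) = (u \<circ> f) t"
    by (rule ex_M_fix_lift)
  then show ?thesis using f(1) by (metis comp_apply)
qed

lemma gen_equiv_if_free_images_meet:
  assumes "inj \<phi>" "inj \<psi>" and agree: "\<forall>i. \<forall>a\<in>A i. \<phi> (i, a) = \<psi> (i, a)"
    and meet: "\<And>i. infinite (\<phi> ` ({i} \<times> - A i) \<inter> \<psi> ` ({i} \<times> - A i))"
  shows "(\<phi>, \<psi>) \<in> gen_equiv A"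
proof -
  have "\<exists>f g. f \<in> M_fix (A i) \<and> g \<in> M_fix (A i) \<and> (\<forall>t\<in>- A i. \<phi> (i, f t) = \<psi> (i, g t))" for i
  proof -
    have "inj (curry \<phi> i)" using assms(1) by (simp add: inj_def)
    moreover have "curry \<chi> i ` X = \<chi> ` ({i} \<times> X)" for \<chi> :: "'a \<times> nat \<Rightarrow> nat" and X
      by auto
    ultimately have "\<exists>f\<in>M_fix (A i). \<exists>g\<in>M_fix (A i). \<forall>t\<in>- A i. curry \<phi> i (f t) = curry \<psi> i (g t)"
      using ex_M_fix_equalizer meet by metis
    then show ?thesis by auto
  qed
  then obtain f g where fg: "\<And>i. f i \<in> M_fix (A i)" "\<And>i. g i \<in> M_fix (A i)"
    "\<And>i t. t \<notin> A i \<Longrightarrow> \<phi> (i, f i t) = \<psi> (i, g i t)"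
    by (metis ComplI)
  have "(\<phi> \<circ> coprod f) (i, t) = (\<psi> \<circ> coprod g) (i, t)" for i t
    using fg agree by (cases "t \<in> A i") (auto simp: coprod_def M_fix_def)
  then have "\<phi> \<circ> coprod f = \<psi> \<circ> coprod g" by auto
  then show ?thesis using gen_equiv_if_coprod_eq[OF assms(1,2) fg(1,2)] by simp
qed

fun increasing_choice :: "(nat \<Rightarrow> nat set) \<Rightarrow> nat \<Rightarrow> nat" where
  "increasing_choice F 0 = (LEAST x. x \<in> F 0)"
| "increasing_choice F (Suc t) = (LEAST x. x \<in> F (Suc t) \<and> increasing_choice F t < x)"

lemma increasing_choice:
  assumes "\<And>t. infinite (F t)"
  shows "increasing_choice F t \<in> F t" and "strict_mono (increasing_choice F)"
proof -
  have step: "increasing_choice F (Suc t) \<in> F (Suc t) \<and>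
      increasing_choice F t < increasing_choice F (Suc t)" for t
  proof -
    have "\<exists>x. x \<in> F (Suc t) \<and> increasing_choice F t < x"
      using assms infinite_nat_iff_unbounded by blast
    from LeastI_ex[OF this] show ?thesis by simp
  qed
  then show "strict_mono (increasing_choice F)" by (simp add: strict_mono_Suc_iff)
  have "\<exists>x. x \<in> F 0" using infinite_imp_nonempty[OF assms] by blast
  then show "increasing_choice F t \<in> F t" using step by (cases t) (auto intro: LeastI_ex)
qed

lemma ex_disjoint_infinite_subsets:
  fixes S :: "'k::countable \<Rightarrow> nat set"
  assumes "\<And>k. infinite (S k)"
  obtains T where "\<And>k. T k \<subseteq> S k" "\<And>k. infinite (T k)" "disjoint_family T"
proof
  \<comment> \<open>Round robin: the m-th element of T k is picked at stage to_nat (m, k) of a single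
    strictly increasing sequence, so distinct indices never pick the same number.\<close>
  define F where "F t = S (snd (from_nat t :: nat \<times> 'k))" for t
  define c where "c = increasing_choice F"
  define T where "T k = range (\<lambda>m::nat. c (to_nat (m, k)))" for k :: 'k
  have F_inf: "infinite (F t)" for t using assms by (simp add: F_def)
  have "inj c" unfolding c_def using increasing_choice(2)[OF F_inf] by (rule strict_mono_imp_inj_on)
  then have c_eq: "c (to_nat x) = c (to_nat y) \<longleftrightarrow> x = y" for x y :: "nat \<times> 'k"
    by (simp add: inj_eq)
  have "c (to_nat (m, k)) \<in> S k" for m :: nat and k :: 'k
  proof -
    have "c (to_nat (m, k)) \<in> F (to_nat (m, k))"
      unfolding c_def by (rule increasing_choice(1)[OF F_inf])
    then show ?thesis by (simp add: F_def)
  qed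
  then show "T k \<subseteq> S k" for k :: 'k by (auto simp: T_def)
  show "infinite (T k)" for k :: 'k
    unfolding T_def by (rule range_inj_infinite) (simp add: inj_def c_eq)
  show "disjoint_family T"
    unfolding disjoint_family_on_def T_def by (auto simp: c_eq)
qed

lemma ex_bij_betw_infinite_nat_sets:
  fixes X Y :: "nat set"
  assumes "infinite X" "infinite Y"
  shows "\<exists>h. bij_betw h X Y"
  using bij_betw_trans[OF bij_betw_inv_into[OF bij_enumerate[OF assms(1)]] bij_enumerate[OF assms(2)]]
  by blast

lemma ex_inj_extension:
  fixes \<phi> :: "'n \<times> nat \<Rightarrow> nat"
  assumes "inj \<phi>" "\<And>i. infinite (- A i)" "\<And>i. infinite (R i)" "disjoint_family R"
    and R_fresh: "\<And>i. R i \<inter> \<phi> ` Sigma UNIV A = {}"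
  obtains \<rho> where "inj \<rho>" "\<forall>i. \<forall>a\<in>A i. \<phi> (i, a) = \<rho> (i, a)" "\<And>i. \<rho> ` ({i} \<times> - A i) = R i"
proof -
  have "\<forall>i. \<exists>h. bij_betw h (- A i) (R i)"
    using ex_bij_betw_infinite_nat_sets assms(2,3) by blast
  then obtain h where h: "\<And>i. bij_betw (h i) (- A i) (R i)" by metis
  define \<rho> where "\<rho> = (\<lambda>(i, t). if t \<in> A i then \<phi> (i, t) else h i t)"
  have agree: "\<forall>i. \<forall>a\<in>A i. \<phi> (i, a) = \<rho> (i, a)" by (simp add: \<rho>_def)
  have "\<rho> ` ({i} \<times> - A i) = h i ` (- A i)" for i by (force simp: \<rho>_def)
  then have free: "\<rho> ` ({i} \<times> - A i) = R i" for i using h by (simp add: bij_betw_def)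
  have "inj \<rho>"
  proof (rule injI)
    fix p q assume eq: "\<rho> p = \<rho> q"
    obtain i t j s where pq: "p = (i, t)" "q = (j, s)" by fastforce
    have in_A: "\<rho> (i, t) \<in> \<phi> ` Sigma UNIV A" if "t \<in> A i" for i t
      using that by (simp add: \<rho>_def)
    have in_R: "\<rho> (i, t) \<in> R i" if "t \<notin> A i" for i t
      using free that by blast
    consider "t \<in> A i" "s \<in> A j" | "t \<notin> A i" "s \<notin> A j"
      | "t \<in> A i" "s \<notin> A j" | "t \<notin> A i" "s \<in> A j"
      by blast
    then show "p = q"
    proof cases
      case 1
      then show ?thesis using eq pq assms(1) by (simp add: \<rho>_def inj_eq)
    next
      case 2
      have "\<rho> p \<in> R i \<inter> R j" using in_R[OF 2(1)] in_R[OF 2(2)] eq pq by simp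
      then have "i = j" using assms(4) by (auto simp: disjoint_family_on_def)
      moreover have "h i t = h j s" using 2 eq pq by (simp add: \<rho>_def)
      ultimately show ?thesis
        using 2 pq inj_onD[OF bij_betw_imp_inj_on[OF h[of i]]] by blast
    next
      case 3
      have "\<rho> p \<in> R j \<inter> \<phi> ` Sigma UNIV A" using in_A[OF 3(1)] in_R[OF 3(2)] eq pq by simp
      then show ?thesis using R_fresh by blast
    next
      case 4
      have "\<rho> p \<in> R i \<inter> \<phi> ` Sigma UNIV A" using in_R[OF 4(1)] in_A[OF 4(2)] eq pq by simp
      then show ?thesis using R_fresh by blast
    qed
  qed
  then show ?thesis using agree free by (rule that)
qed

lemma ex_inj_meeting_free_images:
  fixes \<phi> \<psi> :: "'n::finite \<times> nat \<Rightarrow> nat"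
  assumes "inj \<phi>" "inj \<psi>" "\<And>i. infinite (- A i)"
    and agree: "\<forall>i. \<forall>a\<in>A i. \<phi> (i, a) = \<psi> (i, a)"
  obtains \<rho> where "inj \<rho>" "\<forall>i. \<forall>a\<in>A i. \<phi> (i, a) = \<rho> (i, a)"
    "\<And>i. infinite (\<phi> ` ({i} \<times> - A i) \<inter> \<rho> ` ({i} \<times> - A i))"
    "\<And>i. infinite (\<psi> ` ({i} \<times> - A i) \<inter> \<rho> ` ({i} \<times> - A i))"
proof -
  define S where "S = (\<lambda>(i, c). (if c then \<phi> else \<psi>) ` ({i} \<times> - A i))"
  have "infinite (\<chi> ` ({i} \<times> - A i))" if "inj \<chi>" for \<chi> :: "'n \<times> nat \<Rightarrow> nat" and i
    using that assms(3)[of i] infinite_imp_nonempty[OF assms(3)[of i]]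
    by (simp add: finite_image_iff inj_on_subset finite_cartesian_product_iff)
  then have S_inf: "infinite (S k)" for k using assms(1,2) by (simp add: S_def split: prod.split)
  obtain T where T: "\<And>k. T k \<subseteq> S k" "\<And>k. infinite (T k)" "disjoint_family T"
    using ex_disjoint_infinite_subsets[of S] S_inf by blast
  define R where "R i = T (i, True) \<union> T (i, False)" for i
  have "disjoint_family R"
    using T(3) unfolding disjoint_family_on_def R_def by blast
  have R_free: "R i \<subseteq> \<phi> ` ({i} \<times> - A i) \<union> \<psi> ` ({i} \<times> - A i)" for i
    using T(1)[of "(i, True)"] T(1)[of "(i, False)"] by (auto simp: R_def S_def)
  have free_fixed: "\<chi> ` ({i} \<times> - A i) \<inter> \<chi> ` Sigma UNIV A = {}"
    if "inj \<chi>" for \<chi> :: "'n \<times> nat \<Rightarrow> nat" and i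
    by (auto simp: image_Int[OF that, symmetric])
  have "\<phi> ` Sigma UNIV A = \<psi> ` Sigma UNIV A" using agree by (intro image_cong) auto
  then have "R i \<inter> \<phi> ` Sigma UNIV A = {}" for i
    using R_free[of i] free_fixed[OF assms(1), of i] free_fixed[OF assms(2), of i] by blast
  then obtain \<rho> where \<rho>: "inj \<rho>" "\<forall>i. \<forall>a\<in>A i. \<phi> (i, a) = \<rho> (i, a)" "\<And>i. \<rho> ` ({i} \<times> - A i) = R i"
    using ex_inj_extension assms(1,3) T(2) \<open>disjoint_family R\<close> by (metis R_def infinite_Un)
  show ?thesis
  proof (rule that[OF \<rho>(1,2)])
    show "infinite (\<phi> ` ({i} \<times> - A i) \<inter> \<rho> ` ({i} \<times> - A i))" for i
    proof (rule infinite_super[OF _ T(2)[of "(i, True)"]])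
      show "T (i, True) \<subseteq> \<phi> ` ({i} \<times> - A i) \<inter> \<rho> ` ({i} \<times> - A i)"
        using T(1)[of "(i, True)"] \<rho>(3)[of i] by (auto simp: R_def S_def)
    qed
    show "infinite (\<psi> ` ({i} \<times> - A i) \<inter> \<rho> ` ({i} \<times> - A i))" for i
    proof (rule infinite_super[OF _ T(2)[of "(i, False)"]])
      show "T (i, False) \<subseteq> \<psi> ` ({i} \<times> - A i) \<inter> \<rho> ` ({i} \<times> - A i)"
        using T(1)[of "(i, False)"] \<rho>(3)[of i] by (auto simp: R_def S_def)
    qed
  qed
qed

theorem lemma2p27:
  fixes A :: "'n::finite \<Rightarrow> nat set"
  assumes coinf: "\<And>i. infinite (- A i)"
    and phi: "\<phi> \<in> Inj_prod" and psi: "\<psi> \<in> Inj_prod"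
  shows "(\<phi>, \<psi>) \<in> gen_equiv A \<longleftrightarrow> (\<forall>i. \<forall>a\<in>A i. \<phi> (i, a) = \<psi> (i, a))"
proof
  assume "(\<phi>, \<psi>) \<in> gen_equiv A"
  from gen_equiv_imp_agree[OF this] show "\<forall>i. \<forall>a\<in>A i. \<phi> (i, a) = \<psi> (i, a)" by blast
next
  assume agree: "\<forall>i. \<forall>a\<in>A i. \<phi> (i, a) = \<psi> (i, a)"
  have "inj \<phi>" "inj \<psi>" using phi psi by (simp_all add: Inj_prod_def)
  then obtain \<rho> where \<rho>: "inj \<rho>" "\<forall>i. \<forall>a\<in>A i. \<phi> (i, a) = \<rho> (i, a)"
      "\<And>i. infinite (\<phi> ` ({i} \<times> - A i) \<inter> \<rho> ` ({i} \<times> - A i))"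
      "\<And>i. infinite (\<psi> ` ({i} \<times> - A i) \<inter> \<rho> ` ({i} \<times> - A i))"
    using ex_inj_meeting_free_images[OF _ _ coinf agree] by blast
  have "(\<phi>, \<rho>) \<in> gen_equiv A"
    by (rule gen_equiv_if_free_images_meet[OF \<open>inj \<phi>\<close> \<rho>(1,2,3)])
  moreover have "(\<psi>, \<rho>) \<in> gen_equiv A"
    using agree \<rho>(2) by (intro gen_equiv_if_free_images_meet[OF \<open>inj \<psi>\<close> \<rho>(1) _ \<rho>(4)]) auto
  ultimately show "(\<phi>, \<psi>) \<in> gen_equiv A" by (rule gen_equiv_trans[OF _ gen_equiv_sym])
qed

end
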